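(* Let $G$ be a group containing a non-abelian torsion-free nilpotent subgroup. Then for no integer $N\geq 1$ is there an injective algebra morphism $\mathbb{Z}[G]\to M_N(\mathbb{C})$.
   Context: $\mathbb{Z}[G]$ is the integral group ring of $G$ and $M_N(\mathbb{C})$ the algebra of complex $N\times N$ matrices. *)

theory Defs
  imports "HOL-Algebra.Algebra" "Jordan_Normal_Form.Matrix"
begin

definition comm_subgroup :: "('a, 'b) monoid_scheme \<Rightarrow> 'a set \<Rightarrow> 'a set \<Rightarrow> 'a set" where
  "comm_subgroup G A B =
     generate G {x \<otimes>\<^bsub>G\<^esub> y \<otimes>\<^bsub>G\<^esub> inv\<^bsub>G\<^esub> x \<otimes>\<^bsub>G\<^esub> inv\<^bsub>G\<^esub> y | x y. x \<in> A \<and> y \<in> B}"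

fun lower_central :: "('a, 'b) monoid_scheme \<Rightarrow> 'a set \<Rightarrow> nat \<Rightarrow> 'a set" where
  "lower_central G H 0 = H"
| "lower_central G H (Suc i) = comm_subgroup G H (lower_central G H i)"

definition nilpotent_subgroup :: "('a, 'b) monoid_scheme \<Rightarrow> 'a set \<Rightarrow> bool" where
  "nilpotent_subgroup G H \<longleftrightarrow> subgroup H G \<and> (\<exists>n. lower_central G H n = {\<one>\<^bsub>G\<^esub>})"

definition torsion_free_subgroup :: "('a, 'b) monoid_scheme \<Rightarrow> 'a set \<Rightarrow> bool" where
  "torsion_free_subgroup G H \<longleftrightarrow>
     (\<forall>x\<in>H. \<forall>n::nat. n > 0 \<longrightarrow> x [^]\<^bsub>G\<^esub> n = \<one>\<^bsub>G\<^esub> \<longrightarrow> x = \<one>\<^bsub>G\<^esub>)"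

definition abelian_subset :: "('a, 'b) monoid_scheme \<Rightarrow> 'a set \<Rightarrow> bool" where
  "abelian_subset G H \<longleftrightarrow> (\<forall>x\<in>H. \<forall>y\<in>H. x \<otimes>\<^bsub>G\<^esub> y = y \<otimes>\<^bsub>G\<^esub> x)"

definition grp_ring_carrier :: "('a, 'b) monoid_scheme \<Rightarrow> ('a \<Rightarrow> int) set" where
  "grp_ring_carrier G =
     {f. finite {g. f g \<noteq> 0} \<and> (\<forall>g. g \<notin> carrier G \<longrightarrow> f g = 0)}"

definition grp_ring_add :: "('a \<Rightarrow> int) \<Rightarrow> ('a \<Rightarrow> int) \<Rightarrow> ('a \<Rightarrow> int)" where
  "grp_ring_add f h = (\<lambda>x. f x + h x)"

definition grp_ring_mult :: "('a, 'b) monoid_scheme \<Rightarrow> ('a \<Rightarrow> int) \<Rightarrow> ('a \<Rightarrow> int) \<Rightarrow> ('a \<Rightarrow> int)" where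
  "grp_ring_mult G f h =
     (\<lambda>x. if x \<in> carrier G
          then (\<Sum>g\<in>{g. f g \<noteq> 0}. f g * h (inv\<^bsub>G\<^esub> g \<otimes>\<^bsub>G\<^esub> x)) else 0)"

definition grp_ring_one :: "('a, 'b) monoid_scheme \<Rightarrow> ('a \<Rightarrow> int)" where
  "grp_ring_one G = (\<lambda>x. if x = \<one>\<^bsub>G\<^esub> then 1 else 0)"

text \<open>An (injective) algebra morphism Z[G] -> M_N(C). Z-linearity follows from additivity.\<close>
definition grp_ring_mat_morphism ::
  "('a, 'b) monoid_scheme \<Rightarrow> nat \<Rightarrow> (('a \<Rightarrow> int) \<Rightarrow> complex mat) \<Rightarrow> bool" where
  "grp_ring_mat_morphism G N \<phi> \<longleftrightarrow>
     (\<forall>f\<in>grp_ring_carrier G. \<phi> f \<in> carrier_mat N N)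
   \<and> (\<forall>f\<in>grp_ring_carrier G. \<forall>h\<in>grp_ring_carrier G.
        \<phi> (grp_ring_add f h) = \<phi> f + \<phi> h)
   \<and> (\<forall>f\<in>grp_ring_carrier G. \<forall>h\<in>grp_ring_carrier G.
        \<phi> (grp_ring_mult G f h) = \<phi> f * \<phi> h)
   \<and> \<phi> (grp_ring_one G) = 1\<^sub>m N"

end

(*
  Suppose rho is an injective morphism Z[G] -> M_N(C), and write rho g for the image
  of the group element g.
  In a nilpotent non-abelian subgroup H, the last nontrivial term of the lower central series
  contains a nontrivial commutator z = [x, y] that is central in H. Put B = rho x, A = rho y and
  C = rho z, so that B A = C A B with C commuting with A and B. If u is a common eigenvector of
  B and C, with eigenvalues mu and lam, then the vectors A^j u are eigenvectors of B with
  eigenvalues mu lam^j; since B has at most N eigenvalues, lam^(N!) = 1. Hence, by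
  triangularization, rho w is unipotent for w = z^(N!), i.e. (rho w - 1)^N = 0. But w has infinite
  order because H is torsion-free, so the coefficient of w^N in (w - 1)^N is 1 and (w - 1)^N is a
  nonzero element of Z[G] in the kernel of rho.
*)

theory Submission
  imports Defs "Jordan_Normal_Form.Schur_Decomposition" "Jordan_Normal_Form.Jordan_Normal_Form_Uniqueness"
begin

section \<open>Common eigenvectors and unipotence of complex matrices\<close>

fun mat_prod_upto :: "nat \<Rightarrow> (nat \<Rightarrow> 'a::semiring_1 mat) \<Rightarrow> nat \<Rightarrow> 'a mat" where
  "mat_prod_upto n f 0 = 1\<^sub>m n"
| "mat_prod_upto n f (Suc k) = f k * mat_prod_upto n f k"

lemma mat_prod_upto_carrier:
  "(\<And>i. i < k \<Longrightarrow> f i \<in> carrier_mat n n) \<Longrightarrow> mat_prod_upto n f k \<in> carrier_mat n n"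
  by (induct k) (auto intro: mult_carrier_mat)

lemma pow_mat_Suc_left:
  assumes A: "(A :: 'a::semiring_1 mat) \<in> carrier_mat n n"
  shows "A * A ^\<^sub>m k = A ^\<^sub>m Suc k"
proof (induct k)
  case (Suc k)
  have "A * A ^\<^sub>m Suc k = (A * A ^\<^sub>m k) * A"
    using A by (simp add: assoc_mult_mat[of _ n n _ n _ n])
  then show ?case using Suc by simp
qed (use A in simp)

lemma mat_prod_upto_const:
  assumes "(A :: 'a::semiring_1 mat) \<in> carrier_mat n n"
  shows "mat_prod_upto n (\<lambda>_. A) k = A ^\<^sub>m k"
  using assms by (induct k) (simp_all add: pow_mat_Suc_left[OF assms])

lemma mat_prod_upto_commute:
  assumes A: "A \<in> carrier_mat n n" and f: "\<And>i. i < k \<Longrightarrow> f i \<in> carrier_mat n n"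
    and comm: "\<And>i. i < k \<Longrightarrow> A * f i = f i * A"
  shows "A * mat_prod_upto n f k = mat_prod_upto n f k * A"
  using f comm
proof (induct k)
  case (Suc k)
  have fk: "f k \<in> carrier_mat n n" and Pk: "mat_prod_upto n f k \<in> carrier_mat n n"
    using Suc.prems by (auto intro: mat_prod_upto_carrier)
  have "A * mat_prod_upto n f (Suc k) = (A * f k) * mat_prod_upto n f k"
    using A fk Pk by (simp add: assoc_mult_mat[of _ n n _ n _ n])
  also have "\<dots> = f k * (A * mat_prod_upto n f k)"
    using A fk Pk Suc.prems by (simp add: assoc_mult_mat[of _ n n _ n _ n])
  also have "\<dots> = mat_prod_upto n f (Suc k) * A"
    using A fk Pk Suc by (simp add: assoc_mult_mat[of _ n n _ n _ n])
  finally show ?case .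
qed (use A in simp)

lemma mat_prod_upto_similar:
  assumes fg: "\<And>i. i < k \<Longrightarrow> f i = P * g i * Q" and g: "\<And>i. i < k \<Longrightarrow> g i \<in> carrier_mat n n"
    and P: "P \<in> carrier_mat n n" and Q: "Q \<in> carrier_mat n n"
    and PQ: "P * Q = 1\<^sub>m n" and QP: "Q * P = 1\<^sub>m n"
  shows "mat_prod_upto n f k = P * mat_prod_upto n g k * Q"
  using fg g
proof (induct k)
  case (Suc k)
  have gk: "g k \<in> carrier_mat n n" and Gk: "mat_prod_upto n g k \<in> carrier_mat n n"
    using Suc.prems by (auto intro: mat_prod_upto_carrier)
  have "mat_prod_upto n f (Suc k) = (P * g k * Q) * (P * mat_prod_upto n g k * Q)"
    using Suc by simp
  also have "\<dots> = P * g k * (Q * P) * mat_prod_upto n g k * Q"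
    using P Q gk Gk by (simp add: assoc_mult_mat[of _ n n _ n _ n])
  also have "\<dots> = P * mat_prod_upto n g (Suc k) * Q"
    using P Q gk Gk QP by (simp add: assoc_mult_mat[of _ n n _ n _ n])
  finally show ?case .
qed (use P Q PQ in simp)

lemma char_matrix_commute:
  assumes A: "A \<in> carrier_mat n n" and B: "B \<in> carrier_mat n n" and AB: "A * B = B * A"
  shows "A * char_matrix B e = char_matrix B e * A"
proof -
  have "A * char_matrix B e = A * B + (-e) \<cdot>\<^sub>m A"
    unfolding char_matrix_def using A B
    by (simp add: mult_add_distrib_mat[of _ n n] mult_smult_distrib[of _ n n _ n])
  also have "\<dots> = char_matrix B e * A"
    unfolding char_matrix_def AB using A B
    by (simp add: add_mult_distrib_mat[of _ n n] mult_smult_assoc_mat[of _ n n _ n])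
  finally show ?thesis .
qed

text \<open>Cayley--Hamilton for an upper triangular matrix, with the factors ordered so that the
  last row is killed first.\<close>
lemma upper_triangular_annihilator:
  assumes T: "T \<in> carrier_mat n n" and ut: "upper_triangular T"
  shows "mat_prod_upto n (\<lambda>k. char_matrix T (T $$ (n - Suc k, n - Suc k))) n = 0\<^sub>m n n"
    (is "mat_prod_upto n ?f n = _")
proof -
  have f: "?f k \<in> carrier_mat n n" for k
    using T by simp
  have f_entry: "?f k $$ (i, l) = T $$ (i, l) - (if i = l then T $$ (n - Suc k, n - Suc k) else 0)"
    if "i < n" "l < n" for k i l
    using T that by (simp add: char_matrix_def)
  have rows: "mat_prod_upto n ?f k $$ (i, j) = 0" if "k \<le> n" "n - k \<le> i" "i < n" "j < n" for k i j
    using that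
  proof (induct k arbitrary: i j)
    case (Suc k)
    have Pk: "mat_prod_upto n ?f k \<in> carrier_mat n n"
      by (rule mat_prod_upto_carrier) (use f in blast)
    have term_zero: "?f k $$ (i, l) * mat_prod_upto n ?f k $$ (l, j) = 0" if l: "l < n" for l
    proof (cases "l < i")
      case True
      then show ?thesis using f_entry[of i l k] ut T l Suc.prems by (auto intro: upper_triangularD)
    next
      case False
      then consider "n - k \<le> l" | "l = i" "i = n - Suc k" using Suc.prems by linarith
      then show ?thesis
        by cases (use Suc l f_entry[of i l k] in auto)
    qed
    have "mat_prod_upto n ?f (Suc k) $$ (i, j)
        = (\<Sum>l = 0..<n. ?f k $$ (i, l) * mat_prod_upto n ?f k $$ (l, j))"
      using f[of k] Pk Suc.prems by (simp add: scalar_prod_def)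
    also have "\<dots> = 0"
      using term_zero by (intro sum.neutral) auto
    finally show ?case .
  qed simp
  show ?thesis
    by (rule eq_matI) (use rows[of n] mat_prod_upto_carrier[of n ?f n] f in auto)
qed

text \<open>Cayley--Hamilton in factored form, via a Schur decomposition.\<close>
lemma complex_mat_annihilator:
  fixes M :: "complex mat"
  assumes M: "M \<in> carrier_mat n n"
  obtains e where "\<And>i. i < n \<Longrightarrow> eigenvalue M (e i)"
    and "mat_prod_upto n (\<lambda>i. char_matrix M (e i)) n = 0\<^sub>m n n"
proof -
  obtain es where es: "char_poly M = (\<Prod>a \<leftarrow> es. [:- a, 1:])" "length es = n"
    using char_poly_factorized[OF M] by blast
  obtain T P Q where "schur_decomposition M es = (T, P, Q)"
    by (cases "schur_decomposition M es") auto
  from schur_decomposition[OF M es(1) this]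
  have sim: "similar_mat_wit M T P Q" and ut: "upper_triangular T" and diag: "diag_mat T = es"
    by auto
  note sim_facts = similar_mat_witD2[OF M sim]
  define e where "e i = T $$ (n - Suc i, n - Suc i)" for i
  have eig: "eigenvalue M (e i)" if "i < n" for i
  proof -
    have "e i = es ! (n - Suc i)"
      using that diag sim_facts(5) unfolding e_def diag_mat_def by auto
    then have "e i \<in> set es"
      using that es(2) by simp
    then have "poly (char_poly M) (e i) = 0"
      unfolding es(1) poly_prod_list_zero_iff by auto
    then show ?thesis
      using eigenvalue_root_char_poly[OF M] by blast
  qed
  have "mat_prod_upto n (\<lambda>i. char_matrix M (e i)) n
      = P * mat_prod_upto n (\<lambda>i. char_matrix T (e i)) n * Q"
    using similar_mat_witD2(3)[OF _ similar_mat_wit_char_matrix[OF sim]] M sim_facts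
    by (intro mat_prod_upto_similar) auto
  moreover have "mat_prod_upto n (\<lambda>i. char_matrix T (e i)) n = 0\<^sub>m n n"
    unfolding e_def by (rule upper_triangular_annihilator[OF sim_facts(5) ut])
  ultimately have "mat_prod_upto n (\<lambda>i. char_matrix M (e i)) n = 0\<^sub>m n n"
    using sim_facts(6,7) by simp
  with eig show ?thesis by (rule that)
qed

lemma commuting_mat_common_eigenvector:
  fixes B C :: "complex mat"
  assumes B: "B \<in> carrier_mat n n" and C: "C \<in> carrier_mat n n" and BC: "B * C = C * B"
    and v: "eigenvector C v lam"
  obtains u mu where "eigenvector C u lam" and "eigenvector B u mu"
proof -
  obtain e where ann: "mat_prod_upto n (\<lambda>i. char_matrix B (e i)) n = 0\<^sub>m n n"
    using complex_mat_annihilator[OF B] by blast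
  define g where "g i = char_matrix B (e i)" for i
  define w where "w k = mat_prod_upto n g k *\<^sub>v v" for k
  have g: "g i \<in> carrier_mat n n" for i
    unfolding g_def using B by simp
  have G: "mat_prod_upto n g k \<in> carrier_mat n n" for k
    using g by (rule mat_prod_upto_carrier)
  have v_facts: "v \<in> carrier_vec n" "v \<noteq> 0\<^sub>v n" "C *\<^sub>v v = lam \<cdot>\<^sub>v v"
    using v C unfolding eigenvector_def by auto
  have w: "w k \<in> carrier_vec n" for k
    unfolding w_def using G v_facts(1) by (rule mult_mat_vec_carrier)
  have w_Suc: "w (Suc k) = g k *\<^sub>v w k" for k
    unfolding w_def using g G v_facts by (simp add: assoc_mult_mat_vec[of _ n n _ n])
  have C_w: "C *\<^sub>v w k = lam \<cdot>\<^sub>v w k" for k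
  proof -
    have CG: "C * mat_prod_upto n g k = mat_prod_upto n g k * C"
      using C g unfolding g_def
      by (intro mat_prod_upto_commute char_matrix_commute[OF C B BC[symmetric]]) auto
    have "C *\<^sub>v w k = (C * mat_prod_upto n g k) *\<^sub>v v"
      unfolding w_def using C G v_facts by (simp add: assoc_mult_mat_vec[of _ n n _ n])
    also have "\<dots> = mat_prod_upto n g k *\<^sub>v (C *\<^sub>v v)"
      unfolding CG using C G v_facts by (simp add: assoc_mult_mat_vec[of _ n n _ n])
    finally show ?thesis
      unfolding w_def v_facts(3) using G v_facts by (simp add: mult_mat_vec[of _ n n])
  qed
  have "\<exists>k. w k \<noteq> 0\<^sub>v n \<and> w (Suc k) = 0\<^sub>v n"
  proof (rule ccontr)
    assume "\<not> ?thesis"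
    then have "w k \<noteq> 0\<^sub>v n" for k
      by (induct k) (use v_facts in \<open>auto simp: w_def\<close>)
    moreover have "w n = 0\<^sub>v n"
      unfolding w_def g_def ann using v_facts by auto
    ultimately show False by blast
  qed
  then obtain k where k: "w k \<noteq> 0\<^sub>v n" "g k *\<^sub>v w k = 0\<^sub>v n"
    using w_Suc by auto
  have "eigenvector B (w k) (e k)"
    unfolding eigenvector_char_matrix[OF B] using k w unfolding g_def by blast
  moreover have "eigenvector C (w k) lam"
    unfolding eigenvector_def using k w C_w C by auto
  ultimately show ?thesis using that by blast
qed

lemma eigenvector_unique_eigenvalue:
  fixes A :: "'a::idom mat"
  assumes "eigenvector A v a" and "eigenvector A v b"
  shows "a = b"
proof -
  have v: "v \<in> carrier_vec (dim_row A)" "v \<noteq> 0\<^sub>v (dim_row A)" "a \<cdot>\<^sub>v v = b \<cdot>\<^sub>v v"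
    using assms unfolding eigenvector_def by auto
  then obtain i where i: "i < dim_vec v" "v $ i \<noteq> 0"
    by (metis carrier_vecD eq_vecI index_zero_vec)
  have "a * v $ i = b * v $ i"
    using arg_cong[OF v(3), of "\<lambda>x. x $ i"] i by simp
  then show ?thesis using i by simp
qed

lemma eigenvalue_pow_mat:
  fixes C :: "complex mat"
  assumes C: "C \<in> carrier_mat n n" and ev: "eigenvalue (C ^\<^sub>m m) mu"
  obtains lam where "eigenvalue C lam" and "mu = lam ^ m"
proof -
  obtain v where "eigenvector (C ^\<^sub>m m) v mu"
    using ev unfolding eigenvalue_def by blast
  moreover have "C * C ^\<^sub>m m = C ^\<^sub>m m * C"
    using C by (simp add: pow_mat_Suc_left)
  ultimately obtain u lam where u: "eigenvector (C ^\<^sub>m m) u mu" "eigenvector C u lam"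
    using commuting_mat_common_eigenvector[OF C pow_carrier_mat[OF C]] by metis
  have "eigenvector (C ^\<^sub>m m) u (lam ^ m)"
    using u eigenvector_pow[OF C u(2)] C unfolding eigenvector_def by simp
  with u(1) have "mu = lam ^ m"
    by (rule eigenvector_unique_eigenvalue)
  with u(2) show ?thesis using that unfolding eigenvalue_def by blast
qed

lemma unipotent_char_matrix_pow:
  fixes M :: "complex mat"
  assumes M: "M \<in> carrier_mat n n" and one: "\<And>lam. eigenvalue M lam \<Longrightarrow> lam = 1"
  shows "char_matrix M 1 ^\<^sub>m n = 0\<^sub>m n n"
proof -
  obtain e where e: "\<And>i. i < n \<Longrightarrow> eigenvalue M (e i)"
    and ann: "mat_prod_upto n (\<lambda>i. char_matrix M (e i)) n = 0\<^sub>m n n"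
    using complex_mat_annihilator[OF M] by blast
  have e_one: "e i = 1" if "i < n" for i
    using one e that by blast
  have "mat_prod_upto n (\<lambda>i. char_matrix M (e i)) k = mat_prod_upto n (\<lambda>_. char_matrix M 1) k"
    if "k \<le> n" for k
    using that by (induct k) (simp_all add: e_one)
  then show ?thesis
    using ann mat_prod_upto_const[of "char_matrix M 1" n n] M by simp
qed

lemma left_invertible_mult_vec_nonzero:
  fixes A A' :: "'a::comm_ring_1 mat"
  assumes A: "A \<in> carrier_mat n n" and A': "A' \<in> carrier_mat n n" and inv: "A' * A = 1\<^sub>m n"
    and v: "v \<in> carrier_vec n" "v \<noteq> 0\<^sub>v n"
  shows "A *\<^sub>v v \<noteq> 0\<^sub>v n"
proof
  assume "A *\<^sub>v v = 0\<^sub>v n"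
  then have "A' *\<^sub>v (A *\<^sub>v v) = 0\<^sub>v n"
    using A' by auto
  moreover have "A' *\<^sub>v (A *\<^sub>v v) = (A' * A) *\<^sub>v v"
    using A A' v by simp
  ultimately have "(A' * A) *\<^sub>v v = 0\<^sub>v n"
    by simp
  then show False using v inv by simp
qed

lemma left_invertible_eigenvalue_nonzero:
  fixes A A' :: "'a::comm_ring_1 mat"
  assumes A: "A \<in> carrier_mat n n" and A': "A' \<in> carrier_mat n n" and inv: "A' * A = 1\<^sub>m n"
    and ev: "eigenvalue A mu"
  shows "mu \<noteq> 0"
proof
  assume "mu = 0"
  obtain v where "eigenvector A v mu" using ev unfolding eigenvalue_def by blast
  then have v: "v \<in> carrier_vec n" "v \<noteq> 0\<^sub>v n" "A *\<^sub>v v = 0\<^sub>v n"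
    using A \<open>mu = 0\<close> unfolding eigenvector_def by auto
  then show False using left_invertible_mult_vec_nonzero[OF A A' inv v(1,2)] by simp
qed

lemma eigenvalues_finite_card_le:
  fixes A :: "'a::field mat"
  assumes A: "A \<in> carrier_mat n n"
  shows "finite {mu. eigenvalue A mu}" and "card {mu. eigenvalue A mu} \<le> n"
proof -
  have roots: "{mu. eigenvalue A mu} = {x. poly (char_poly A) x = 0}"
    using eigenvalue_root_char_poly[OF A] by blast
  have "char_poly A \<noteq> 0" and "degree (char_poly A) = n"
    using degree_monic_char_poly[OF A] by auto
  then show "finite {mu. eigenvalue A mu}" and "card {mu. eigenvalue A mu} \<le> n"
    unfolding roots using poly_roots_finite card_poly_roots_bound by metis+
qed

lemma geometric_in_small_set_root_of_unity:
  fixes c x :: "'a::field"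
  assumes mem: "\<And>j. c * x ^ j \<in> S" and S: "finite S" "card S \<le> n" and nz: "\<And>j. c * x ^ j \<noteq> 0"
  shows "x ^ fact n = 1"
proof -
  have "\<not> inj_on (\<lambda>j. c * x ^ j) {0..n}"
  proof
    assume "inj_on (\<lambda>j. c * x ^ j) {0..n}"
    then have "card {0..n} \<le> card S"
      using mem S(1) by (intro card_inj_on_le) auto
    then show False using S(2) by simp
  qed
  then obtain a b where ab: "a < b" "b \<le> n" "c * x ^ a = c * x ^ b"
    unfolding inj_on_def by (metis atLeastAtMost_iff linorder_neq_iff)
  have "c * x ^ a * x ^ (b - a) = c * x ^ b"
    using ab(1) by (simp add: mult.assoc power_add[symmetric])
  also have "\<dots> = c * x ^ a * 1"
    using ab(3) by (simp only: mult_1_right)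
  finally have "x ^ (b - a) = 1"
    using nz[of a] by (metis mult_left_cancel)
  moreover have "(b - a) dvd fact n"
    using ab by (intro dvd_fact) auto
  ultimately show ?thesis
    by (metis dvdE power_mult power_one)
qed

lemma twisted_commutation_eigenvector_orbit:
  fixes A B C :: "complex mat"
  assumes A: "A \<in> carrier_mat n n" and B: "B \<in> carrier_mat n n" and C: "C \<in> carrier_mat n n"
    and A': "A' \<in> carrier_mat n n" "A' * A = 1\<^sub>m n"
    and BA: "B * A = C * A * B" and CA: "C * A = A * C"
    and u: "eigenvector C u lam" "eigenvector B u mu"
  shows "eigenvector C (A ^\<^sub>m j *\<^sub>v u) lam \<and> eigenvector B (A ^\<^sub>m j *\<^sub>v u) (mu * lam ^ j)"
  using u
proof (induct j arbitrary: u mu)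
  case (Suc j)
  have u_facts: "u \<in> carrier_vec n" "u \<noteq> 0\<^sub>v n" "C *\<^sub>v u = lam \<cdot>\<^sub>v u" "B *\<^sub>v u = mu \<cdot>\<^sub>v u"
    using Suc.prems B C unfolding eigenvector_def by auto
  have "C *\<^sub>v (A *\<^sub>v u) = (C * A) *\<^sub>v u"
    using A C u_facts by simp
  also have "\<dots> = A *\<^sub>v (C *\<^sub>v u)"
    unfolding CA using A C u_facts by simp
  finally have Cu: "C *\<^sub>v (A *\<^sub>v u) = lam \<cdot>\<^sub>v (A *\<^sub>v u)"
    using A u_facts by (simp add: mult_mat_vec[of _ n n])
  have "B *\<^sub>v (A *\<^sub>v u) = (B * A) *\<^sub>v u"
    using A B u_facts by simp
  also have "\<dots> = C *\<^sub>v (A *\<^sub>v (B *\<^sub>v u))"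
    unfolding BA using A B C u_facts by (simp add: assoc_mult_mat_vec[of _ n n _ n])
  finally have Bu: "B *\<^sub>v (A *\<^sub>v u) = (mu * lam) \<cdot>\<^sub>v (A *\<^sub>v u)"
    using A C u_facts Cu by (simp add: mult_mat_vec[of _ n n] smult_smult_assoc mult.commute)
  have "eigenvector C (A *\<^sub>v u) lam" "eigenvector B (A *\<^sub>v u) (mu * lam)"
    using Cu Bu left_invertible_mult_vec_nonzero[OF A A' u_facts(1,2)] A B C u_facts(1)
    unfolding eigenvector_def by auto
  from Suc.hyps[OF this]
  have "eigenvector C (A ^\<^sub>m j *\<^sub>v (A *\<^sub>v u)) lam
      \<and> eigenvector B (A ^\<^sub>m j *\<^sub>v (A *\<^sub>v u)) (mu * lam ^ Suc j)"
    by (simp add: mult.assoc)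
  moreover have "A ^\<^sub>m Suc j *\<^sub>v u = A ^\<^sub>m j *\<^sub>v (A *\<^sub>v u)"
    using A u_facts by (simp add: assoc_mult_mat_vec[of _ n n _ n])
  ultimately show ?case
    by simp
qed (use A C in \<open>auto simp: eigenvector_def\<close>)

lemma twisted_commutator_eigenvalue_root_of_unity:
  fixes A B C :: "complex mat"
  assumes A: "A \<in> carrier_mat n n" and B: "B \<in> carrier_mat n n" and C: "C \<in> carrier_mat n n"
    and A': "A' \<in> carrier_mat n n" "A' * A = 1\<^sub>m n"
    and B': "B' \<in> carrier_mat n n" "B' * B = 1\<^sub>m n"
    and BA: "B * A = C * A * B" and CA: "C * A = A * C" and CB: "C * B = B * C"
    and ev: "eigenvalue C lam"
  shows "lam ^ fact n = 1"
proof -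
  obtain v where "eigenvector C v lam"
    using ev unfolding eigenvalue_def by blast
  then obtain u mu where u: "eigenvector C u lam" "eigenvector B u mu"
    using commuting_mat_common_eigenvector[OF B C CB[symmetric]] by blast
  have ev_B: "eigenvalue B (mu * lam ^ j)" for j
    using twisted_commutation_eigenvector_orbit[OF A B C A' BA CA u] unfolding eigenvalue_def by blast
  have nonzero: "mu * lam ^ j \<noteq> 0" for j
    using left_invertible_eigenvalue_nonzero[OF B B' ev_B] .
  show ?thesis
    using ev_B
    by (intro geometric_in_small_set_root_of_unity[OF _ eigenvalues_finite_card_le[OF B] nonzero]) simp
qed

section \<open>Central commutators and elements of infinite order\<close>

context group
begin

lemma commutator_eq_one_iff:
  assumes "x \<in> carrier G" and "y \<in> carrier G"
  shows "x \<otimes> y \<otimes> inv x \<otimes> inv y = \<one> \<longleftrightarrow> x \<otimes> y = y \<otimes> x"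
proof -
  have "x \<otimes> y \<otimes> inv x \<otimes> inv y = (x \<otimes> y) \<otimes> inv (y \<otimes> x)"
    using assms by (simp add: inv_mult_group m_assoc)
  also have "\<dots> = \<one> \<longleftrightarrow> x \<otimes> y = \<one> \<otimes> (y \<otimes> x)"
    using assms by (intro inv_solve_right') auto
  finally show ?thesis using assms by simp
qed

lemma lower_central_subset:
  assumes H: "subgroup H G"
  shows "lower_central G H k \<subseteq> H"
proof (induct k)
  case (Suc k)
  have "{x \<otimes> y \<otimes> inv x \<otimes> inv y | x y. x \<in> H \<and> y \<in> lower_central G H k} \<subseteq> H"
    using Suc H by (auto intro!: subgroup.m_closed subgroup.m_inv_closed)
  then show ?case
    unfolding lower_central.simps comm_subgroup_def by (rule generate_subgroup_incl[OF _ H])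
qed simp

lemma commutator_in_lower_central:
  "x \<in> H \<Longrightarrow> y \<in> lower_central G H k \<Longrightarrow> x \<otimes> y \<otimes> inv x \<otimes> inv y \<in> lower_central G H (Suc k)"
  unfolding lower_central.simps comm_subgroup_def by (auto intro: generate.incl)

lemma lower_central_Suc_eq_one_iff:
  "lower_central G H (Suc k) = {\<one>} \<longleftrightarrow>
     (\<forall>x\<in>H. \<forall>y\<in>lower_central G H k. x \<otimes> y \<otimes> inv x \<otimes> inv y = \<one>)"
proof
  assume "lower_central G H (Suc k) = {\<one>}"
  then show "\<forall>x\<in>H. \<forall>y\<in>lower_central G H k. x \<otimes> y \<otimes> inv x \<otimes> inv y = \<one>"
    using commutator_in_lower_central by blast
next
  assume "\<forall>x\<in>H. \<forall>y\<in>lower_central G H k. x \<otimes> y \<otimes> inv x \<otimes> inv y = \<one>"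
  then have "lower_central G H (Suc k) \<subseteq> {\<one>}"
    unfolding lower_central.simps comm_subgroup_def
    by (intro generate_subgroup_incl[OF _ triv_subgroup]) blast
  then show "lower_central G H (Suc k) = {\<one>}"
    unfolding lower_central.simps comm_subgroup_def using generate.one by blast
qed

lemma nilpotent_nonabelian_last_lower_central:
  assumes nil: "nilpotent_subgroup G H" and nonab: "\<not> abelian_subset G H"
  obtains k where "lower_central G H (Suc k) \<noteq> {\<one>}" and "lower_central G H (Suc (Suc k)) = {\<one>}"
proof -
  let ?L = "lower_central G H"
  have HG: "H \<subseteq> carrier G" and "\<exists>n. ?L n = {\<one>}"
    using nil subgroup.subset unfolding nilpotent_subgroup_def by auto
  then obtain n where n: "?L n = {\<one>}" and least: "\<And>m. m < n \<Longrightarrow> ?L m \<noteq> {\<one>}"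
    using exists_least_iff[of "\<lambda>n. ?L n = {\<one>}"] by blast
  have "n \<noteq> 0"
  proof
    assume "n = 0"
    then have "H = {\<one>}"
      using n by simp
    with nonab show False
      unfolding abelian_subset_def by simp
  qed
  moreover have "?L (Suc 0) \<noteq> {\<one>}"
  proof
    assume "?L (Suc 0) = {\<one>}"
    then have "\<forall>x\<in>H. \<forall>y\<in>H. x \<otimes> y \<otimes> inv x \<otimes> inv y = \<one>"
      using lower_central_Suc_eq_one_iff[of H 0] by simp
    then have "abelian_subset G H"
      using HG commutator_eq_one_iff unfolding abelian_subset_def by blast
    with nonab show False ..
  qed
  ultimately obtain k where "n = Suc (Suc k)"
    using n by (metis not0_implies_Suc)
  then show ?thesis
    using that least[of "Suc k"] n by simp
qed

text \<open>The last nontrivial term of the lower central series is central.\<close>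
lemma nilpotent_nonabelian_central_commutator:
  assumes nil: "nilpotent_subgroup G H" and nonab: "\<not> abelian_subset G H"
  obtains x y where "x \<in> H" "y \<in> H" "x \<otimes> y \<otimes> inv x \<otimes> inv y \<noteq> \<one>"
    "\<And>a. a \<in> H \<Longrightarrow> a \<otimes> (x \<otimes> y \<otimes> inv x \<otimes> inv y) = (x \<otimes> y \<otimes> inv x \<otimes> inv y) \<otimes> a"
proof -
  let ?L = "lower_central G H"
  have H: "subgroup H G" and HG: "H \<subseteq> carrier G"
    using nil subgroup.subset unfolding nilpotent_subgroup_def by auto
  obtain k where k: "?L (Suc k) \<noteq> {\<one>}" "?L (Suc (Suc k)) = {\<one>}"
    using nil nonab by (rule nilpotent_nonabelian_last_lower_central)
  then obtain x y where x: "x \<in> H" and y: "y \<in> ?L k" and z: "x \<otimes> y \<otimes> inv x \<otimes> inv y \<noteq> \<one>"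
    using lower_central_Suc_eq_one_iff by blast
  have "x \<otimes> y \<otimes> inv x \<otimes> inv y \<in> ?L (Suc k)"
    using x y by (rule commutator_in_lower_central)
  then have central: "a \<otimes> (x \<otimes> y \<otimes> inv x \<otimes> inv y) = (x \<otimes> y \<otimes> inv x \<otimes> inv y) \<otimes> a"
    if "a \<in> H" for a
    using k(2) that lower_central_Suc_eq_one_iff[of H "Suc k"] commutator_eq_one_iff
      lower_central_subset[OF H] HG by blast
  show ?thesis
    using that x y z central lower_central_subset[OF H] by blast
qed

lemma torsion_free_ord_pow_eq_0:
  fixes m :: nat
  assumes "torsion_free_subgroup G H" "H \<subseteq> carrier G" "z \<in> H" "z \<noteq> \<one>" "m > 0"
  shows "ord (z [^] m) = 0"
proof -
  have z: "z \<in> carrier G"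
    using assms by blast
  have "(z [^] m) [^] k \<noteq> \<one>" if "k \<noteq> 0" for k :: nat
  proof -
    have "m * k > 0"
      using assms(5) that by simp
    then have "z [^] (m * k) \<noteq> \<one>"
      using assms(1,3,4) unfolding torsion_free_subgroup_def by blast
    then show ?thesis
      by (simp add: nat_pow_pow[OF z])
  qed
  then show ?thesis
    using z by (simp add: ord_eq_0)
qed

lemma ord_eq_0_pow_inj:
  assumes "w \<in> carrier G" "ord w = 0" "w [^] (a::nat) = w [^] (b::nat)"
  shows "a = b"
  using assms int_pow_eq[of w "int a" "int b"] by (simp add: int_pow_int)

end

section \<open>Matrix representations of the integral group ring\<close>

definition grp_ring_basis :: "'a \<Rightarrow> 'a \<Rightarrow> int" where
  "grp_ring_basis g = (\<lambda>x. if x = g then 1 else 0)"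

primrec grp_ring_sub_one_pow :: "('a, 'b) monoid_scheme \<Rightarrow> 'a \<Rightarrow> nat \<Rightarrow> 'a \<Rightarrow> int" where
  "grp_ring_sub_one_pow G w 0 = grp_ring_one G"
| "grp_ring_sub_one_pow G w (Suc j) =
     grp_ring_add (grp_ring_mult G (grp_ring_basis w) (grp_ring_sub_one_pow G w j))
       (- grp_ring_sub_one_pow G w j)"

context group
begin

lemma grp_ring_basis_in_carrier: "g \<in> carrier G \<Longrightarrow> grp_ring_basis g \<in> grp_ring_carrier G"
  unfolding grp_ring_carrier_def grp_ring_basis_def by auto

lemma uminus_in_grp_ring_carrier: "f \<in> grp_ring_carrier G \<Longrightarrow> - f \<in> grp_ring_carrier G"
  unfolding grp_ring_carrier_def by auto

lemma zero_in_grp_ring_carrier: "(\<lambda>_. 0) \<in> grp_ring_carrier G"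
  unfolding grp_ring_carrier_def by auto

lemma grp_ring_one_eq_basis: "grp_ring_one G = grp_ring_basis \<one>"
  unfolding grp_ring_one_def grp_ring_basis_def ..

lemma grp_ring_mult_basis:
  assumes "g \<in> carrier G"
  shows "grp_ring_mult G (grp_ring_basis g) f = (\<lambda>x. if x \<in> carrier G then f (inv g \<otimes> x) else 0)"
proof -
  have supp: "{h. grp_ring_basis g h \<noteq> 0} = {g}"
    unfolding grp_ring_basis_def by auto
  show ?thesis
    unfolding grp_ring_mult_def supp by (intro ext) (simp add: grp_ring_basis_def)
qed

lemma grp_ring_mult_basis_basis:
  assumes g: "g \<in> carrier G" and h: "h \<in> carrier G"
  shows "grp_ring_mult G (grp_ring_basis g) (grp_ring_basis h) = grp_ring_basis (g \<otimes> h)"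
proof
  fix x
  have "x \<in> carrier G \<Longrightarrow> inv g \<otimes> x = h \<longleftrightarrow> x = g \<otimes> h"
    using g h by (metis inv_solve_left)
  then show "grp_ring_mult G (grp_ring_basis g) (grp_ring_basis h) x = grp_ring_basis (g \<otimes> h) x"
    using g h unfolding grp_ring_mult_basis[OF g] by (auto simp: grp_ring_basis_def)
qed

lemma grp_ring_mult_basis_in_carrier:
  assumes g: "g \<in> carrier G" and f: "f \<in> grp_ring_carrier G"
  shows "grp_ring_mult G (grp_ring_basis g) f \<in> grp_ring_carrier G"
proof -
  have "{x. grp_ring_mult G (grp_ring_basis g) f x \<noteq> 0} \<subseteq> (\<otimes>) g ` {y. f y \<noteq> 0}"
  proof
    fix x assume "x \<in> {x. grp_ring_mult G (grp_ring_basis g) f x \<noteq> 0}"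
    then have x: "x \<in> carrier G" "f (inv g \<otimes> x) \<noteq> 0"
      unfolding grp_ring_mult_basis[OF g] by (auto split: if_splits)
    have "x = g \<otimes> (inv g \<otimes> x)"
      using g x by (simp add: m_assoc[symmetric])
    with x show "x \<in> (\<otimes>) g ` {y. f y \<noteq> 0}" by blast
  qed
  moreover have "finite {y. f y \<noteq> 0}"
    using f unfolding grp_ring_carrier_def by blast
  ultimately have "finite {x. grp_ring_mult G (grp_ring_basis g) f x \<noteq> 0}"
    by (meson finite_surj)
  then show ?thesis
    unfolding grp_ring_carrier_def grp_ring_mult_basis[OF g] by auto
qed

lemma grp_ring_sub_one_pow_support:
  assumes w: "w \<in> carrier G"
  shows "grp_ring_sub_one_pow G w j x \<noteq> 0 \<Longrightarrow> \<exists>k\<le>j. x = w [^] k"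
proof (induct j arbitrary: x)
  case 0
  then show ?case by (simp add: grp_ring_one_def split: if_splits)
next
  case (Suc j)
  show ?case
  proof (cases "grp_ring_sub_one_pow G w j x = 0")
    case True
    then have x: "x \<in> carrier G" "grp_ring_sub_one_pow G w j (inv w \<otimes> x) \<noteq> 0"
      using Suc.prems by (auto simp: grp_ring_add_def grp_ring_mult_basis[OF w] split: if_splits)
    then obtain k where k: "k \<le> j" "inv w \<otimes> x = w [^] k"
      using Suc.hyps by blast
    then have "x = w [^] Suc k"
      using w x by (metis inv_solve_left nat_pow_Suc2 nat_pow_closed)
    with k show ?thesis by auto
  next
    case False
    then show ?thesis
      using Suc.hyps le_SucI by blast
  qed
qed

lemma grp_ring_sub_one_pow_in_carrier:
  assumes w: "w \<in> carrier G"
  shows "grp_ring_sub_one_pow G w j \<in> grp_ring_carrier G"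
proof -
  have "{x. grp_ring_sub_one_pow G w j x \<noteq> 0} \<subseteq> (\<lambda>k. w [^] k) ` {..j}"
    using grp_ring_sub_one_pow_support[OF w] by blast
  then have "finite {x. grp_ring_sub_one_pow G w j x \<noteq> 0}"
    by (meson finite_surj finite_atMost)
  moreover have "grp_ring_sub_one_pow G w j x = 0" if "x \<notin> carrier G" for x
    using grp_ring_sub_one_pow_support[OF w, of j x] that w by auto
  ultimately show ?thesis
    unfolding grp_ring_carrier_def by blast
qed

lemma grp_ring_sub_one_pow_top_coeff:
  assumes w: "w \<in> carrier G" and ord: "ord w = 0"
  shows "grp_ring_sub_one_pow G w j (w [^] j) = 1"
proof (induct j)
  case 0
  then show ?case by (simp add: grp_ring_one_def)
next
  case (Suc j)
  have "inv w \<otimes> w [^] Suc j = w [^] j"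
    using w by (metis inv_solve_left nat_pow_Suc2 nat_pow_closed)
  moreover have "grp_ring_sub_one_pow G w j (w [^] Suc j) = 0"
    using grp_ring_sub_one_pow_support[OF w, of j "w [^] Suc j"] ord_eq_0_pow_inj[OF w ord]
    by force
  ultimately show ?case
    using Suc w by (simp add: grp_ring_add_def grp_ring_mult_basis[OF w])
qed

end

locale grp_ring_mat_rep = group G for G (structure) +
  fixes N :: nat and \<phi> :: "('a \<Rightarrow> int) \<Rightarrow> complex mat"
  assumes morphism: "grp_ring_mat_morphism G N \<phi>"
begin

lemma hom_carrier: "f \<in> grp_ring_carrier G \<Longrightarrow> \<phi> f \<in> carrier_mat N N"
  and hom_add: "f \<in> grp_ring_carrier G \<Longrightarrow> h \<in> grp_ring_carrier G \<Longrightarrow>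
    \<phi> (grp_ring_add f h) = \<phi> f + \<phi> h"
  and hom_mult: "f \<in> grp_ring_carrier G \<Longrightarrow> h \<in> grp_ring_carrier G \<Longrightarrow>
    \<phi> (grp_ring_mult G f h) = \<phi> f * \<phi> h"
  and hom_one: "\<phi> (grp_ring_one G) = 1\<^sub>m N"
  using morphism unfolding grp_ring_mat_morphism_def by auto

lemma hom_zero: "\<phi> (\<lambda>_. 0) = 0\<^sub>m N N"
proof -
  have Z: "\<phi> (\<lambda>_. 0) \<in> carrier_mat N N"
    using hom_carrier zero_in_grp_ring_carrier by blast
  have twice: "\<phi> (\<lambda>_. 0) + \<phi> (\<lambda>_. 0) = \<phi> (\<lambda>_. 0)"
    using hom_add[OF zero_in_grp_ring_carrier zero_in_grp_ring_carrier] by (simp add: grp_ring_add_def)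
  have "\<phi> (\<lambda>_. 0) $$ (i, j) = 0" if "i < N" "j < N" for i j
    using arg_cong[OF twice, of "\<lambda>A. A $$ (i, j)"] Z that by simp
  then show ?thesis
    using Z by (intro eq_matI) auto
qed

lemma hom_uminus:
  assumes f: "f \<in> grp_ring_carrier G"
  shows "\<phi> (- f) = - \<phi> f"
proof -
  have F: "\<phi> f \<in> carrier_mat N N" and F': "\<phi> (- f) \<in> carrier_mat N N"
    using f hom_carrier uminus_in_grp_ring_carrier by auto
  have sum: "\<phi> f + \<phi> (- f) = 0\<^sub>m N N"
    using hom_add[OF f uminus_in_grp_ring_carrier[OF f]] hom_zero by (simp add: grp_ring_add_def)
  have "\<phi> (- f) $$ (i, j) = - \<phi> f $$ (i, j)" if "i < N" "j < N" for i j
    using arg_cong[OF sum, of "\<lambda>A. A $$ (i, j)"] F F' that by (simp add: eq_neg_iff_add_eq_0 add.commute)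
  then show ?thesis
    using F F' by (intro eq_matI) auto
qed

definition rep :: "'a \<Rightarrow> complex mat" where
  "rep g = \<phi> (grp_ring_basis g)"

lemma rep_carrier: "g \<in> carrier G \<Longrightarrow> rep g \<in> carrier_mat N N"
  unfolding rep_def using hom_carrier grp_ring_basis_in_carrier by blast

lemma rep_mult: "g \<in> carrier G \<Longrightarrow> h \<in> carrier G \<Longrightarrow> rep (g \<otimes> h) = rep g * rep h"
  unfolding rep_def
  using hom_mult[OF grp_ring_basis_in_carrier grp_ring_basis_in_carrier] grp_ring_mult_basis_basis
  by simp

lemma rep_one: "rep \<one> = 1\<^sub>m N"
  unfolding rep_def grp_ring_one_eq_basis[symmetric] by (rule hom_one)

lemma rep_inv_left: "g \<in> carrier G \<Longrightarrow> rep (inv g) * rep g = 1\<^sub>m N"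
  using rep_mult[of "inv g" g] rep_one by simp

lemma rep_pow:
  assumes "g \<in> carrier G"
  shows "rep (g [^] k) = rep g ^\<^sub>m k"
  using assms rep_carrier[OF assms] by (induct k) (simp_all add: rep_one rep_mult)

lemma hom_sub_one_pow:
  assumes w: "w \<in> carrier G"
  shows "\<phi> (grp_ring_sub_one_pow G w j) = char_matrix (rep w) 1 ^\<^sub>m j"
proof (induct j)
  case 0
  then show ?case
    using hom_one rep_carrier[OF w] by (simp add: char_matrix_def)
next
  case (Suc j)
  let ?X = "grp_ring_sub_one_pow G w j"
  have X: "?X \<in> grp_ring_carrier G"
    using w by (rule grp_ring_sub_one_pow_in_carrier)
  have W: "rep w \<in> carrier_mat N N" and Y: "\<phi> ?X \<in> carrier_mat N N"
    using rep_carrier[OF w] hom_carrier[OF X] .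
  have "\<phi> (grp_ring_sub_one_pow G w (Suc j)) = rep w * \<phi> ?X + - \<phi> ?X"
    using hom_add[OF grp_ring_mult_basis_in_carrier[OF w X] uminus_in_grp_ring_carrier[OF X]]
      hom_mult[OF grp_ring_basis_in_carrier[OF w] X] hom_uminus[OF X]
    by (simp add: rep_def)
  also have "\<dots> = char_matrix (rep w) 1 * \<phi> ?X"
  proof -
    have "(-1) \<cdot>\<^sub>m \<phi> ?X = - \<phi> ?X"
      using Y by (intro eq_matI) auto
    then show ?thesis
      unfolding char_matrix_def using W Y
      by (simp add: add_mult_distrib_mat[of _ N N] mult_smult_assoc_mat[of _ N N _ N])
  qed
  also have "\<dots> = char_matrix (rep w) 1 ^\<^sub>m Suc j"
    unfolding Suc by (rule pow_mat_Suc_left[OF char_matrix_closed[OF W]])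
  finally show ?case .
qed

lemma not_inj_if_unipotent:
  assumes w: "w \<in> carrier G" and ord: "ord w = 0"
    and unipotent: "char_matrix (rep w) 1 ^\<^sub>m N = 0\<^sub>m N N"
  shows "\<not> inj_on \<phi> (grp_ring_carrier G)"
proof
  assume inj: "inj_on \<phi> (grp_ring_carrier G)"
  have "\<phi> (grp_ring_sub_one_pow G w N) = \<phi> (\<lambda>_. 0)"
    using hom_sub_one_pow[OF w] unipotent hom_zero by simp
  then have "grp_ring_sub_one_pow G w N = (\<lambda>_. 0)"
    using inj_onD[OF inj _ grp_ring_sub_one_pow_in_carrier[OF w] zero_in_grp_ring_carrier] by blast
  with grp_ring_sub_one_pow_top_coeff[OF w ord, of N] show False
    by simp
qed

lemma rep_commutator_eigenvalue_root_of_unity: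
  assumes x: "x \<in> carrier G" and y: "y \<in> carrier G"
    and z: "z = x \<otimes> y \<otimes> inv x \<otimes> inv y" and zx: "z \<otimes> x = x \<otimes> z" and zy: "z \<otimes> y = y \<otimes> z"
    and ev: "eigenvalue (rep z) lam"
  shows "lam ^ fact N = 1"
proof -
  have zc: "z \<in> carrier G"
    using x y z by simp
  have "rep x * rep y = rep (x \<otimes> y)"
    using x y by (simp add: rep_mult)
  also have "x \<otimes> y = z \<otimes> y \<otimes> x"
    using x y z by (simp add: m_assoc)
  finally have BA: "rep x * rep y = rep z * rep y * rep x"
    using x y zc by (simp add: rep_mult)
  have CA: "rep z * rep y = rep y * rep z" and CB: "rep z * rep x = rep x * rep z"
    using x y zc zx zy by (simp_all flip: rep_mult)
  show ?thesis
    using twisted_commutator_eigenvalue_root_of_unity[OF rep_carrier[OF y] rep_carrier[OF x]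
        rep_carrier[OF zc] rep_carrier[OF inv_closed[OF y]] rep_inv_left[OF y]
        rep_carrier[OF inv_closed[OF x]] rep_inv_left[OF x] BA CA CB ev] .
qed

lemma rep_commutator_pow_unipotent:
  assumes x: "x \<in> carrier G" and y: "y \<in> carrier G"
    and z: "z = x \<otimes> y \<otimes> inv x \<otimes> inv y" and zx: "z \<otimes> x = x \<otimes> z" and zy: "z \<otimes> y = y \<otimes> z"
  shows "char_matrix (rep (z [^] (fact N :: nat))) 1 ^\<^sub>m N = 0\<^sub>m N N"
proof -
  have zc: "z \<in> carrier G"
    using x y z by simp
  have "mu = 1" if "eigenvalue (rep (z [^] (fact N :: nat))) mu" for mu
  proof -
    have "eigenvalue (rep z ^\<^sub>m fact N) mu"
      using that rep_pow[OF zc] by simp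
    then obtain lam where lam: "eigenvalue (rep z) lam" "mu = lam ^ fact N"
      using eigenvalue_pow_mat[OF rep_carrier[OF zc]] by blast
    then show ?thesis
      using rep_commutator_eigenvalue_root_of_unity[OF x y z zx zy lam(1)] by simp
  qed
  then show ?thesis
    using rep_carrier[OF nat_pow_closed[OF zc]] by (rule unipotent_char_matrix_pow[rotated])
qed

end

theorem mainTheorem3:
  fixes G (structure)
  assumes "group G"
    and "\<exists>H. subgroup H G \<and> nilpotent_subgroup G H \<and> torsion_free_subgroup G H
              \<and> \<not> abelian_subset G H"
  shows "\<not> (\<exists>(N::nat) \<phi>. N \<ge> 1 \<and> grp_ring_mat_morphism G N \<phi>
                        \<and> inj_on \<phi> (grp_ring_carrier G))"
proof
  assume "\<exists>(N::nat) \<phi>. N \<ge> 1 \<and> grp_ring_mat_morphism G N \<phi> \<and> inj_on \<phi> (grp_ring_carrier G)"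
  then obtain N \<phi> where "grp_ring_mat_morphism G N \<phi>" and inj: "inj_on \<phi> (grp_ring_carrier G)"
    by blast
  with assms(1) interpret grp_ring_mat_rep G N \<phi>
    by (simp add: grp_ring_mat_rep_def grp_ring_mat_rep_axioms_def)
  obtain H where H: "subgroup H G" "nilpotent_subgroup G H" "torsion_free_subgroup G H"
    "\<not> abelian_subset G H"
    using assms(2) by blast
  obtain x y where xy: "x \<in> H" "y \<in> H" and nontrivial: "x \<otimes> y \<otimes> inv x \<otimes> inv y \<noteq> \<one>"
    and central: "\<And>a. a \<in> H \<Longrightarrow> a \<otimes> (x \<otimes> y \<otimes> inv x \<otimes> inv y) = (x \<otimes> y \<otimes> inv x \<otimes> inv y) \<otimes> a"
    using nilpotent_nonabelian_central_commutator[OF H(2,4)] by blast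
  define z where "z = x \<otimes> y \<otimes> inv x \<otimes> inv y"
  have HG: "H \<subseteq> carrier G"
    using H(1) by (rule subgroup.subset)
  have x: "x \<in> carrier G" and y: "y \<in> carrier G" and zH: "z \<in> H"
    using xy HG H(1) unfolding z_def by (auto intro!: subgroup.m_closed subgroup.m_inv_closed)
  have zx: "z \<otimes> x = x \<otimes> z" and zy: "z \<otimes> y = y \<otimes> z"
    using central[OF xy(1)] central[OF xy(2)] unfolding z_def by simp_all
  have "ord (z [^] (fact N :: nat)) = 0"
    using H(3) HG zH nontrivial unfolding z_def by (intro torsion_free_ord_pow_eq_0) auto
  then show False
    using not_inj_if_unipotent rep_commutator_pow_unipotent[OF x y z_def zx zy] zH HG inj by blast
qed

end
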